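(* Let $\alpha,\beta$ be sets, $z\in\beta$, $\mathit{seq}:\beta\times\alpha\to\beta$ and $\oplus:\beta\times\beta\to\beta$. Let $\Gamma=\{\mathrm{foldl}(\mathit{seq},z,L) : L \text{ a finite list over }\alpha\}$. Assume $\oplus$ is associative on $\Gamma$ and $z$ is an identity of $\oplus$ on $\Gamma$. Then the following are equivalent: (1) for all finite lists $p_1,p_2$ over $\alpha$, $\mathrm{foldl}(\mathit{seq},z,p_1\mathbin{+\!\!+}p_2)=\mathrm{foldl}(\mathit{seq},z,p_1)\oplus\mathrm{foldl}(\mathit{seq},z,p_2)$; (2) for all $d\in\alpha$ and $e\in\Gamma$, $\mathit{seq}(e,d)=e\oplus\mathit{seq}(z,d)$.
   Context: Lists are finite; $\mathbin{+\!\!+}$ is list concatenation. For $f:B\times A\to B$, $b\in B$: $\mathrm{foldl}(f,b,[\,])=b$ and $\mathrm{foldl}(f,b,[x_1,\dots,x_n])=f(\cdots f(f(b,x_1),x_2)\cdots,x_n)$. *)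

theory Defs
  imports Main
begin

definition Gamma :: "('b \<Rightarrow> 'a \<Rightarrow> 'b) \<Rightarrow> 'b \<Rightarrow> 'b set" where
  "Gamma seq z = {foldl seq z L | L. True}"

end

theory Submission
  imports Defs
begin

text \<open>Specialising the homomorphism law to a singleton second list gives the one-step law.
  Conversely, the one-step law extends the homomorphism law from \<open>p2\<close> to \<open>p2 @ [d]\<close> by
  associativity, and the case \<open>p2 = []\<close> only needs \<open>z\<close> to be a right identity.\<close>

lemma foldl_in_Gamma [simp, intro]: "foldl seq z L \<in> Gamma seq z"
  unfolding Gamma_def by blast

lemma GammaE:
  assumes "e \<in> Gamma seq z"
  obtains L where "e = foldl seq z L"
  using assms unfolding Gamma_def by blast

lemma seq_eq_oplus_if_foldl_append_hom:
  assumes hom: "\<And>p1 p2. foldl seq z (p1 @ p2) = oplus (foldl seq z p1) (foldl seq z p2)"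
    and "e \<in> Gamma seq z"
  shows "seq e d = oplus e (seq z d)"
proof -
  from \<open>e \<in> Gamma seq z\<close> obtain L where "e = foldl seq z L" by (rule GammaE)
  then show ?thesis using hom[of L "[d]"] by simp
qed

lemma foldl_append_hom_if_seq_eq_oplus:
  assumes assoc: "\<forall>x\<in>Gamma seq z. \<forall>y\<in>Gamma seq z. \<forall>w\<in>Gamma seq z.
                    oplus (oplus x y) w = oplus x (oplus y w)"
    and right_ident: "\<And>e. e \<in> Gamma seq z \<Longrightarrow> oplus e z = e"
    and step: "\<And>d e. e \<in> Gamma seq z \<Longrightarrow> seq e d = oplus e (seq z d)"
  shows "foldl seq z (p1 @ p2) = oplus (foldl seq z p1) (foldl seq z p2)"
proof (induction p2 rule: rev_induct)
  case Nil
  then show ?case by (simp add: right_ident)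
next
  case (snoc d p2)
  have seq_z_d: "seq z d \<in> Gamma seq z"
    using foldl_in_Gamma[of seq z "[d]"] by simp
  have "foldl seq z (p1 @ p2 @ [d]) = seq (foldl seq z (p1 @ p2)) d"
    by (simp only: append_assoc[symmetric] foldl_Cons foldl_Nil foldl_append)
  also have "\<dots> = oplus (foldl seq z (p1 @ p2)) (seq z d)"
    by (rule step) (rule foldl_in_Gamma)
  also have "\<dots> = oplus (oplus (foldl seq z p1) (foldl seq z p2)) (seq z d)"
    using snoc by simp
  also have "\<dots> = oplus (foldl seq z p1) (oplus (foldl seq z p2) (seq z d))"
    using assoc seq_z_d by simp
  also have "\<dots> = oplus (foldl seq z p1) (foldl seq z (p2 @ [d]))"
    using step[of "foldl seq z p2" d] by simp
  finally show ?case by simp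
qed

theorem lemma2:
  fixes seq :: "'b \<Rightarrow> 'a \<Rightarrow> 'b" and oplus :: "'b \<Rightarrow> 'b \<Rightarrow> 'b" and z :: 'b
  assumes assoc: "\<forall>x\<in>Gamma seq z. \<forall>y\<in>Gamma seq z. \<forall>w\<in>Gamma seq z.
                    oplus (oplus x y) w = oplus x (oplus y w)"
    and ident: "\<forall>e\<in>Gamma seq z. oplus z e = e \<and> oplus e z = e"
  shows "(\<forall>p1 p2. foldl seq z (p1 @ p2) = oplus (foldl seq z p1) (foldl seq z p2))
     \<longleftrightarrow> (\<forall>d. \<forall>e\<in>Gamma seq z. seq e d = oplus e (seq z d))"
proof
  assume "\<forall>p1 p2. foldl seq z (p1 @ p2) = oplus (foldl seq z p1) (foldl seq z p2)"
  then show "\<forall>d. \<forall>e\<in>Gamma seq z. seq e d = oplus e (seq z d)"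
    by (blast intro: seq_eq_oplus_if_foldl_append_hom)
next
  assume "\<forall>d. \<forall>e\<in>Gamma seq z. seq e d = oplus e (seq z d)"
  then show "\<forall>p1 p2. foldl seq z (p1 @ p2) = oplus (foldl seq z p1) (foldl seq z p2)"
    by (intro allI foldl_append_hom_if_seq_eq_oplus[OF assoc]) (use ident in auto)
qed

end
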